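(* Let $G$ be a multitriangulation of the projective plane. Then $G$ has a vertex of degree $2$, $3$, $4$ or $6$, or two adjacent vertices of degree $5$.
   Context: A multitriangulation of a surface is a loopless multigraph 2-cell embedded on the surface such that every facial closed walk has length 3. *)

theory Defs
  imports Main
begin

text \<open>Surface embeddings of multigraphs are encoded combinatorially by
generalized (flag) maps: a finite set D of flags with three fixed-point-free
involutions a0 (change vertex), a1 (change edge), a2 (change face), where
a0 and a2 commute and a0 a2 is fixed-point-free.
Every 2-cell embedding of a connected multigraph in a closed surface arises
this way (and conversely).\<close>

inductive_set orb :: "('a \<Rightarrow> 'a) set \<Rightarrow> 'a \<Rightarrow> 'a set" for fs x where
  base: "x \<in> orb fs x"
| step: "y \<in> orb fs x \<Longrightarrow> f \<in> fs \<Longrightarrow> f y \<in> orb fs x"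

definition fp_free_inv :: "'a set \<Rightarrow> ('a \<Rightarrow> 'a) \<Rightarrow> bool" where
  "fp_free_inv D f \<longleftrightarrow> (\<forall>x\<in>D. f x \<in> D \<and> f x \<noteq> x \<and> f (f x) = x)"

definition gmap :: "'a set \<Rightarrow> ('a \<Rightarrow> 'a) \<Rightarrow> ('a \<Rightarrow> 'a) \<Rightarrow> ('a \<Rightarrow> 'a) \<Rightarrow> bool" where
  "gmap D a0 a1 a2 \<longleftrightarrow> finite D \<and> D \<noteq> {} \<and>
     fp_free_inv D a0 \<and> fp_free_inv D a1 \<and> fp_free_inv D a2 \<and>
     (\<forall>x\<in>D. a0 (a2 x) = a2 (a0 x) \<and> a0 (a2 x) \<noteq> x)"

definition gmap_connected :: "'a set \<Rightarrow> ('a \<Rightarrow> 'a) \<Rightarrow> ('a \<Rightarrow> 'a) \<Rightarrow> ('a \<Rightarrow> 'a) \<Rightarrow> bool" where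
  "gmap_connected D a0 a1 a2 \<longleftrightarrow> (\<forall>x\<in>D. orb {a0, a1, a2} x = D)"

definition map_vertex :: "('a \<Rightarrow> 'a) \<Rightarrow> ('a \<Rightarrow> 'a) \<Rightarrow> 'a \<Rightarrow> 'a set" where
  "map_vertex a1 a2 x = orb {a1, a2} x"

definition map_edge :: "('a \<Rightarrow> 'a) \<Rightarrow> ('a \<Rightarrow> 'a) \<Rightarrow> 'a \<Rightarrow> 'a set" where
  "map_edge a0 a2 x = orb {a0, a2} x"

definition map_face :: "('a \<Rightarrow> 'a) \<Rightarrow> ('a \<Rightarrow> 'a) \<Rightarrow> 'a \<Rightarrow> 'a set" where
  "map_face a0 a1 x = orb {a0, a1} x"

definition euler_char :: "'a set \<Rightarrow> ('a \<Rightarrow> 'a) \<Rightarrow> ('a \<Rightarrow> 'a) \<Rightarrow> ('a \<Rightarrow> 'a) \<Rightarrow> int" where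
  "euler_char D a0 a1 a2 =
     int (card (map_vertex a1 a2 ` D)) - int (card (map_edge a0 a2 ` D))
     + int (card (map_face a0 a1 ` D))"

definition orientable :: "'a set \<Rightarrow> ('a \<Rightarrow> 'a) \<Rightarrow> ('a \<Rightarrow> 'a) \<Rightarrow> ('a \<Rightarrow> 'a) \<Rightarrow> bool" where
  "orientable D a0 a1 a2 \<longleftrightarrow> (\<exists>c :: 'a \<Rightarrow> bool. \<forall>x\<in>D.
      c (a0 x) \<noteq> c x \<and> c (a1 x) \<noteq> c x \<and> c (a2 x) \<noteq> c x)"

definition projective_plane_map :: "'a set \<Rightarrow> ('a \<Rightarrow> 'a) \<Rightarrow> ('a \<Rightarrow> 'a) \<Rightarrow> ('a \<Rightarrow> 'a) \<Rightarrow> bool" where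
  "projective_plane_map D a0 a1 a2 \<longleftrightarrow> gmap D a0 a1 a2 \<and> gmap_connected D a0 a1 a2 \<and>
     \<not> orientable D a0 a1 a2 \<and> euler_char D a0 a1 a2 = 1"

definition map_loopless :: "'a set \<Rightarrow> ('a \<Rightarrow> 'a) \<Rightarrow> ('a \<Rightarrow> 'a) \<Rightarrow> ('a \<Rightarrow> 'a) \<Rightarrow> bool" where
  "map_loopless D a0 a1 a2 \<longleftrightarrow> (\<forall>x\<in>D. a0 x \<notin> map_vertex a1 a2 x)"

text \<open>Every facial closed walk has length 3 (a face of length k consists of 2k flags).\<close>
definition all_faces_triangles :: "'a set \<Rightarrow> ('a \<Rightarrow> 'a) \<Rightarrow> ('a \<Rightarrow> 'a) \<Rightarrow> bool" where
  "all_faces_triangles D a0 a1 \<longleftrightarrow> (\<forall>x\<in>D. card (map_face a0 a1 x) = 6)"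

definition multitriangulation :: "'a set \<Rightarrow> ('a \<Rightarrow> 'a) \<Rightarrow> ('a \<Rightarrow> 'a) \<Rightarrow> ('a \<Rightarrow> 'a) \<Rightarrow> bool" where
  "multitriangulation D a0 a1 a2 \<longleftrightarrow> map_loopless D a0 a1 a2 \<and> all_faces_triangles D a0 a1"

text \<open>Degree of the vertex containing flag x (each edge-end gives two flags).\<close>
definition map_degree :: "('a \<Rightarrow> 'a) \<Rightarrow> ('a \<Rightarrow> 'a) \<Rightarrow> 'a \<Rightarrow> nat" where
  "map_degree a1 a2 x = card (map_vertex a1 a2 x) div 2"

end

theory Submission
  imports Defs Complex_Main
begin

text \<open>Charges live on flags: a flag x gets 12 / |v(x)| - 1, where v(x) is the set of the 2d flags
of its vertex, of degree d; so a vertex carries 2(6 - d). Since every edge has four flags and every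
triangle six, Euler's formula makes the total charge 12 times the Euler characteristic; only the
fact that this is positive is used. In a loopless triangulation no vertex has degree 1 (the triangle
at its single edge-end would have a loop as third side), so if no degree is 2, 3, 4 or 6, all
degrees are 5 or at least 7. Every flag at a degree-5 vertex now passes 1/5 to the flag a0 x at the
other end of its edge. With no two degree-5 vertices adjacent, a degree-5 vertex ends with charge 0,
and a vertex of degree d \<ge> 7 receives through at most d of its 2d flags: two flags x and a1 x
pointing to degree-5 vertices would make these adjacent across the triangle at the corner x. So its
final charge is at most 12 - 2d + d/5 < 0, and the Euler characteristic cannot be positive.\<close>

definition involutions_on :: "'a set \<Rightarrow> ('a \<Rightarrow> 'a) set \<Rightarrow> bool" where
  "involutions_on D fs \<longleftrightarrow> (\<forall>f\<in>fs. \<forall>y\<in>D. f y \<in> D \<and> f (f y) = y)"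

lemma orb_subset:
  assumes "x \<in> S" and "\<And>f y. f \<in> fs \<Longrightarrow> y \<in> S \<Longrightarrow> f y \<in> S"
  shows "orb fs x \<subseteq> S"
proof
  fix y assume "y \<in> orb fs x"
  then show "y \<in> S" by induction (use assms in blast)+
qed

lemma orb_trans:
  assumes "y \<in> orb fs x" and "z \<in> orb fs y"
  shows "z \<in> orb fs x"
  using assms(2) by induction (auto intro: assms(1) orb.step)

lemma orb_stepI: "f \<in> fs \<Longrightarrow> f x \<in> orb fs x"
  by (rule orb.step[OF orb.base])

lemma orb_subset_involutions_on:
  "involutions_on D fs \<Longrightarrow> x \<in> D \<Longrightarrow> orb fs x \<subseteq> D"
  unfolding involutions_on_def by (rule orb_subset) auto

lemma orb_sym:
  assumes inv: "involutions_on D fs" and "x \<in> D" and "y \<in> orb fs x"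
  shows "x \<in> orb fs y"
  using assms(3)
proof induction
  case base
  show ?case by (rule orb.base)
next
  case (step y f)
  have "y \<in> D" using orb_subset_involutions_on[OF inv \<open>x \<in> D\<close>] step.hyps(1) by blast
  then have "f (f y) = y" using inv step.hyps(2) unfolding involutions_on_def by blast
  then have "y \<in> orb fs (f y)" using orb_stepI[OF step.hyps(2), of "f y"] by simp
  then show ?case using step.IH by (rule orb_trans)
qed

lemma orb_eq:
  assumes "involutions_on D fs" and "x \<in> D" and "y \<in> orb fs x"
  shows "orb fs y = orb fs x"
proof
  show "orb fs y \<subseteq> orb fs x" using orb_trans[OF assms(3)] by blast
  show "orb fs x \<subseteq> orb fs y" using orb_trans[OF orb_sym[OF assms]] by blast
qed

lemma sum_over_classes:
  assumes "finite D"
    and "\<And>x. x \<in> D \<Longrightarrow> x \<in> C x \<and> C x \<subseteq> D"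
    and "\<And>x y. x \<in> D \<Longrightarrow> y \<in> C x \<Longrightarrow> C y = C x"
  shows "(\<Sum>x\<in>D. f x) = (\<Sum>K\<in>C ` D. \<Sum>x\<in>K. f x)"
proof -
  have "(\<Sum>x\<in>D. f x) = (\<Sum>K\<in>C ` D. \<Sum>x\<in>{x \<in> D. C x = K}. f x)"
    by (rule sum.image_gen[OF assms(1)])
  also have "\<dots> = (\<Sum>K\<in>C ` D. \<Sum>x\<in>K. f x)"
  proof (rule sum.cong[OF refl])
    fix K assume "K \<in> C ` D"
    then obtain z where z: "z \<in> D" "K = C z" by blast
    have "{x \<in> D. C x = K} \<subseteq> K" using assms(2) z by auto
    moreover have "K \<subseteq> {x \<in> D. C x = K}" using assms(2,3) z by blast
    ultimately have "{x \<in> D. C x = K} = K" by (rule subset_antisym)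
    then show "(\<Sum>x\<in>{x \<in> D. C x = K}. f x) = (\<Sum>x\<in>K. f x)" by simp
  qed
  finally show ?thesis .
qed

lemma sum_over_orbits:
  assumes "finite D" and "involutions_on D fs"
  shows "(\<Sum>x\<in>D. f x) = (\<Sum>K\<in>orb fs ` D. \<Sum>x\<in>K. f x)"
proof (rule sum_over_classes[OF assms(1)])
  show "x \<in> orb fs x \<and> orb fs x \<subseteq> D" if "x \<in> D" for x
    using orb.base[of x fs] orb_subset_involutions_on[OF assms(2) that] by simp
  show "orb fs y = orb fs x" if "x \<in> D" "y \<in> orb fs x" for x y
    using orb_eq[OF assms(2) that] .
qed

lemma card_orbits_eq_sum:
  assumes "finite D" and "involutions_on D fs"
  shows "real (card (orb fs ` D)) = (\<Sum>x\<in>D. 1 / real (card (orb fs x)))"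
proof -
  have "(\<Sum>x\<in>K. 1 / real (card (orb fs x))) = 1" if K: "K \<in> orb fs ` D" for K
  proof -
    obtain z where z: "z \<in> D" "K = orb fs z" using K by blast
    have "K \<subseteq> D"
      using orb_subset_involutions_on[OF assms(2) z(1)] z(2) by simp
    then have "finite K"
      by (rule finite_subset[OF _ assms(1)])
    moreover have "z \<in> K"
      using orb.base[of z fs] z(2) by simp
    moreover have "(\<Sum>x\<in>K. 1 / real (card (orb fs x))) = (\<Sum>x\<in>K. 1 / real (card K))"
      using orb_eq[OF assms(2) z(1)] z(2) by (intro sum.cong) simp_all
    moreover have "card K \<noteq> 0"
      using \<open>finite K\<close> \<open>z \<in> K\<close> by auto
    ultimately show ?thesis
      by simp
  qed
  then show ?thesis
    by (simp add: sum_over_orbits[OF assms])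
qed

lemma card_orb_le:
  assumes "x \<in> S" "finite S" "\<And>f y. f \<in> fs \<Longrightarrow> y \<in> S \<Longrightarrow> f y \<in> S"
  shows "card (orb fs x) \<le> card S"
  using assms by (meson card_mono orb_subset)

lemma hexagonal_orbit_distinct:
  assumes i0: "fp_free_inv D a0" and i1: "fp_free_inv D a1" and x: "x \<in> D"
    and six: "card (orb {a0, a1} x) = 6"
  shows "distinct [x, a0 x, a1 (a0 x), a0 (a1 (a0 x)), a1 x, a0 (a1 x)]"
proof -
  define x1 x2 x3 y1 y2 where "x1 = a0 x" "x2 = a1 x1" "x3 = a0 x2" "y1 = a1 x" "y2 = a0 y1"
  note defs = x1_x2_x3_y1_y2_def
  have inD: "x1 \<in> D" "x2 \<in> D" "x3 \<in> D" "y1 \<in> D" "y2 \<in> D"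
    using i0 i1 x unfolding defs fp_free_inv_def by simp_all
  have undo: "a0 x1 = x" "a1 x2 = x1" "a0 x3 = x2" "a1 y1 = x" "a0 y2 = y1"
    using i0 i1 x inD unfolding defs fp_free_inv_def by simp_all
  have fixfree: "x \<noteq> x1" "x1 \<noteq> x2" "x2 \<noteq> x3" "x \<noteq> y1" "y1 \<noteq> y2"
    using i0 i1 x inD unfolding defs fp_free_inv_def by metis+
  have "y1 \<noteq> x1"
  proof
    assume "y1 = x1"
    then have "card (orb {a0, a1} x) \<le> card {x, x1}"
      using undo by (intro card_orb_le) (auto simp: defs)
    then show False using six by (simp add: card_insert_if split: if_split_asm)
  qed
  have "x3 \<noteq> y1"
  proof
    assume "x3 = y1"
    then have "card (orb {a0, a1} x) \<le> card {x, x1, x2, x3}"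
      using undo by (intro card_orb_le) (auto simp: defs)
    also have "\<dots> \<le> 4" by (simp add: card_insert_if)
    finally show False using six by simp
  qed
  then have "x \<noteq> x2" "x \<noteq> y2" "x2 \<noteq> y2"
    using \<open>y1 \<noteq> x1\<close> undo unfolding defs by metis+
  then have "x \<noteq> x3" "x1 \<noteq> x3" "x1 \<noteq> y2" "x2 \<noteq> y1" "x3 \<noteq> y2"
    using fixfree undo unfolding defs by metis+
  then show ?thesis
    using fixfree \<open>y1 \<noteq> x1\<close> \<open>x3 \<noteq> y1\<close> \<open>x \<noteq> x2\<close> \<open>x \<noteq> y2\<close>
      \<open>x2 \<noteq> y2\<close>
    unfolding defs by auto
qed

lemma hexagonal_orbit_braid:
  assumes i0: "fp_free_inv D a0" and i1: "fp_free_inv D a1" and x: "x \<in> D"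
    and six: "card (orb {a0, a1} x) = 6"
  shows "a0 (a1 (a0 x)) = a1 (a0 (a1 x))"
proof -
  let ?xs = "[x, a0 x, a1 (a0 x), a0 (a1 (a0 x)), a1 x, a0 (a1 x)]"
  have dist: "distinct ?xs" by (rule hexagonal_orbit_distinct[OF assms])
  have closed: "a0 y \<in> orb {a0, a1} x" "a1 y \<in> orb {a0, a1} x" if "y \<in> orb {a0, a1} x" for y
    using orb.step[OF that] by simp_all
  have "set ?xs \<subseteq> orb {a0, a1} x"
    by (simp add: closed orb.base)
  moreover have "finite (orb {a0, a1} x)"
    using six card.infinite by force
  moreover have "card (set ?xs) = card (orb {a0, a1} x)"
    using distinct_card[OF dist] six by simp
  ultimately have "orb {a0, a1} x = set ?xs"
    by (metis card_subset_eq)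
  moreover have "a1 (a0 (a1 x)) \<in> orb {a0, a1} x"
    by (simp add: closed orb.base)
  moreover have "a0 (a1 x) \<in> D" "a1 (a1 (a0 (a1 x))) = a0 (a1 x)"
    "a1 (a1 x) = x" "a1 (a1 (a0 x)) = a0 x"
    using i0 i1 x unfolding fp_free_inv_def by simp_all
  \<comment> \<open>a1 (a0 (a1 x)) is one of the six listed flags; as a1 is a fixed-point-free involution,
    only a0 (a1 (a0 x)) is left\<close>
  ultimately show ?thesis
    using dist i1 unfolding fp_free_inv_def by auto
qed

locale generalized_map =
  fixes D :: "'a set" and a0 a1 a2 :: "'a \<Rightarrow> 'a"
  assumes gmap: "gmap D a0 a1 a2"
begin

lemma finite_D: "finite D"
  using gmap by (simp add: gmap_def)

lemma generators_closed [simp]: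
  "x \<in> D \<Longrightarrow> a0 x \<in> D" "x \<in> D \<Longrightarrow> a1 x \<in> D" "x \<in> D \<Longrightarrow> a2 x \<in> D"
  using gmap by (simp_all add: gmap_def fp_free_inv_def)

lemma generators_involutive [simp]:
  "x \<in> D \<Longrightarrow> a0 (a0 x) = x" "x \<in> D \<Longrightarrow> a1 (a1 x) = x" "x \<in> D \<Longrightarrow> a2 (a2 x) = x"
  using gmap by (simp_all add: gmap_def fp_free_inv_def)

lemma generators_fixpoint_free:
  "x \<in> D \<Longrightarrow> a0 x \<noteq> x" "x \<in> D \<Longrightarrow> a1 x \<noteq> x" "x \<in> D \<Longrightarrow> a2 x \<noteq> x"
  using gmap by (simp_all add: gmap_def fp_free_inv_def)

lemma a0_a2_commute: "x \<in> D \<Longrightarrow> a0 (a2 x) = a2 (a0 x)"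
  and a0_a2_fixpoint_free: "x \<in> D \<Longrightarrow> a0 (a2 x) \<noteq> x"
  using gmap unfolding gmap_def by blast+

lemma involutions_on_generators: "fs \<subseteq> {a0, a1, a2} \<Longrightarrow> involutions_on D fs"
  unfolding involutions_on_def by auto

lemma map_vertex_eq:
  "x \<in> D \<Longrightarrow> y \<in> map_vertex a1 a2 x \<Longrightarrow> map_vertex a1 a2 y = map_vertex a1 a2 x"
  unfolding map_vertex_def by (rule orb_eq[OF involutions_on_generators]) auto

lemma map_vertex_a1 [simp]: "x \<in> D \<Longrightarrow> map_vertex a1 a2 (a1 x) = map_vertex a1 a2 x"
  and map_vertex_a2 [simp]: "x \<in> D \<Longrightarrow> map_vertex a1 a2 (a2 x) = map_vertex a1 a2 x"
  by (rule map_vertex_eq; simp add: map_vertex_def orb_stepI)+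

lemma map_vertex_subset: "x \<in> D \<Longrightarrow> map_vertex a1 a2 x \<subseteq> D"
  unfolding map_vertex_def by (rule orb_subset_involutions_on[OF involutions_on_generators]) auto

lemma finite_map_vertex: "x \<in> D \<Longrightarrow> finite (map_vertex a1 a2 x)"
  using map_vertex_subset finite_D by (rule finite_subset)

lemma map_degree_eq:
  "x \<in> D \<Longrightarrow> y \<in> map_vertex a1 a2 x \<Longrightarrow> map_degree a1 a2 y = map_degree a1 a2 x"
  by (simp add: map_degree_def map_vertex_eq)

lemma map_edge_eq:
  assumes "x \<in> D"
  shows "map_edge a0 a2 x = {x, a0 x, a2 x, a0 (a2 x)}"
proof
  show "map_edge a0 a2 x \<subseteq> {x, a0 x, a2 x, a0 (a2 x)}"
    unfolding map_edge_def by (rule orb_subset) (auto simp: assms a0_a2_commute)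
  show "{x, a0 x, a2 x, a0 (a2 x)} \<subseteq> map_edge a0 a2 x"
    using orb.step[of _ "{a0, a2}" x] orb.base[of x] unfolding map_edge_def by simp
qed

lemma card_map_edge:
  assumes "x \<in> D"
  shows "card (map_edge a0 a2 x) = 4"
proof -
  have "distinct [x, a0 x, a2 x, a0 (a2 x)]"
    using assms generators_fixpoint_free a0_a2_fixpoint_free generators_involutive generators_closed by (simp, metis)
  then show ?thesis
    using distinct_card[of "[x, a0 x, a2 x, a0 (a2 x)]"] by (simp add: assms map_edge_eq)
qed

lemma euler_char_triangulation:
  assumes "all_faces_triangles D a0 a1"
  shows "12 * real_of_int (euler_char D a0 a1 a2) = (\<Sum>x\<in>D. 12 / card (map_vertex a1 a2 x) - 1)"
proof -
  have vertices: "real (card (map_vertex a1 a2 ` D)) = (\<Sum>x\<in>D. 1 / card (map_vertex a1 a2 x))"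
    unfolding map_vertex_def[abs_def] by (rule card_orbits_eq_sum[OF finite_D involutions_on_generators]) auto
  have "real (card (map_edge a0 a2 ` D)) = (\<Sum>x\<in>D. 1 / card (map_edge a0 a2 x))"
    unfolding map_edge_def[abs_def] by (rule card_orbits_eq_sum[OF finite_D involutions_on_generators]) auto
  then have edges: "real (card (map_edge a0 a2 ` D)) = card D / 4"
    by (simp add: card_map_edge)
  have "real (card (map_face a0 a1 ` D)) = (\<Sum>x\<in>D. 1 / card (map_face a0 a1 x))"
    unfolding map_face_def[abs_def] by (rule card_orbits_eq_sum[OF finite_D involutions_on_generators]) auto
  then have faces: "real (card (map_face a0 a1 ` D)) = card D / 6"
    using assms by (simp add: all_faces_triangles_def)
  show ?thesis
    unfolding euler_char_def using vertices edges faces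
    by (simp add: sum_subtractf sum_distrib_left)
qed

end

locale loopless_triangulation = generalized_map +
  assumes multitriangulation: "multitriangulation D a0 a1 a2"
begin

lemma map_vertex_a0_neq:
  assumes "x \<in> D"
  shows "map_vertex a1 a2 (a0 x) \<noteq> map_vertex a1 a2 x"
proof
  assume "map_vertex a1 a2 (a0 x) = map_vertex a1 a2 x"
  then have "a0 x \<in> map_vertex a1 a2 x"
    using orb.base[of "a0 x" "{a1, a2}"] unfolding map_vertex_def by simp
  then show False
    using multitriangulation assms unfolding multitriangulation_def map_loopless_def by blast
qed

lemma triangle_braid:
  assumes "x \<in> D"
  shows "a0 (a1 (a0 x)) = a1 (a0 (a1 x))"
proof (rule hexagonal_orbit_braid[OF _ _ assms])
  show "fp_free_inv D a0" "fp_free_inv D a1"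
    using gmap by (simp_all add: gmap_def)
  show "card (orb {a0, a1} x) = 6"
    using multitriangulation assms
    by (simp add: multitriangulation_def all_faces_triangles_def map_face_def)
qed

lemma neighbours_across_triangle_adjacent:
  assumes "y \<in> D"
  obtains u where "u \<in> D" "map_vertex a1 a2 u = map_vertex a1 a2 (a0 y)"
    "map_vertex a1 a2 (a0 u) = map_vertex a1 a2 (a0 (a1 y))"
proof
  show "a1 (a0 y) \<in> D" "map_vertex a1 a2 (a1 (a0 y)) = map_vertex a1 a2 (a0 y)"
    using assms by simp_all
  show "map_vertex a1 a2 (a0 (a1 (a0 y))) = map_vertex a1 a2 (a0 (a1 y))"
    using assms by (simp add: triangle_braid)
qed

lemma card_map_vertex_ge_4:
  assumes x: "x \<in> D"
  shows "4 \<le> card (map_vertex a1 a2 x)"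
proof (rule ccontr)
  assume small: "\<not> 4 \<le> card (map_vertex a1 a2 x)"
  have "a2 x = a1 x"
  proof (rule ccontr)
    assume ne: "a2 x \<noteq> a1 x"
    have "a1 (a2 x) \<noteq> x"
      using ne generators_involutive(2)[OF generators_closed(3)[OF x]] by force
    moreover have "a1 (a2 x) \<noteq> a1 x"
      using generators_fixpoint_free(3)[OF x] generators_involutive(2)[OF generators_closed(3)[OF x]]
        generators_involutive(2)[OF x] by force
    ultimately have dist: "distinct [x, a1 x, a2 x, a1 (a2 x)]"
      using ne x generators_fixpoint_free(2,3)[OF x] generators_fixpoint_free(2)[of "a2 x"] by auto
    have "set [x, a1 x, a2 x, a1 (a2 x)] \<subseteq> map_vertex a1 a2 x"
      using orb.step[of _ "{a1, a2}" x] orb.base[of x] unfolding map_vertex_def by simp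
    then have "card (set [x, a1 x, a2 x, a1 (a2 x)]) \<le> card (map_vertex a1 a2 x)"
      by (rule card_mono[OF finite_map_vertex[OF x]])
    then show False
      using small distinct_card[OF dist] by simp
  qed
  then have "map_vertex a1 a2 (a0 (a1 x)) = map_vertex a1 a2 (a0 x)"
    using x a0_a2_commute[OF x] by simp
  then have "map_vertex a1 a2 (a0 (a1 (a0 x))) = map_vertex a1 a2 (a1 (a0 x))"
    using x by (simp add: triangle_braid)
  then show False
    using map_vertex_a0_neq[of "a1 (a0 x)"] x by simp
qed

lemma card_flags_to_degree_5_le_half:
  assumes no_55: "\<And>x. x \<in> D \<Longrightarrow> map_degree a1 a2 x = 5 \<Longrightarrow> map_degree a1 a2 (a0 x) \<noteq> 5"
    and z: "z \<in> D"
  shows "2 * card {x \<in> map_vertex a1 a2 z. map_degree a1 a2 (a0 x) = 5} \<le> card (map_vertex a1 a2 z)"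
proof -
  define V B where "V = map_vertex a1 a2 z" and "B = {x \<in> V. map_degree a1 a2 (a0 x) = 5}"
  have VD: "V \<subseteq> D"
    unfolding V_def by (rule map_vertex_subset[OF z])
  have "a1 y \<in> V" if "y \<in> V" for y
    using that z unfolding V_def map_vertex_def by (auto intro: orb.step)
  then have a1B: "a1 ` B \<subseteq> V"
    unfolding B_def by auto
  have "B \<inter> a1 ` B = {}"
  proof (rule ccontr)
    assume "B \<inter> a1 ` B \<noteq> {}"
    then obtain y where y: "y \<in> B" "a1 y \<in> B"
      using VD unfolding B_def by (auto simp: subset_iff)
    then have "y \<in> D" using VD unfolding B_def by auto
    then obtain u where "u \<in> D" "map_vertex a1 a2 u = map_vertex a1 a2 (a0 y)"
      "map_vertex a1 a2 (a0 u) = map_vertex a1 a2 (a0 (a1 y))"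
      by (rule neighbours_across_triangle_adjacent)
    then have "map_degree a1 a2 u = 5" "map_degree a1 a2 (a0 u) = 5"
      using y unfolding B_def map_degree_def by simp_all
    then show False using no_55 \<open>u \<in> D\<close> by blast
  qed
  moreover have "inj_on a1 B"
    using VD unfolding B_def by (intro inj_on_inverseI[of _ a1]) auto
  moreover have "finite V"
    unfolding V_def by (rule finite_map_vertex[OF z])
  ultimately have "card B + card B \<le> card V"
    using a1B card_Un_disjoint[of B "a1 ` B"] card_mono[of V "B \<union> a1 ` B"] card_image[of a1 B]
    unfolding B_def by (auto simp: finite_subset)
  then show ?thesis
    unfolding V_def B_def by simp
qed

definition transfer :: "'a \<Rightarrow> real" where
  "transfer x = (if map_degree a1 a2 x = 5 then 1 / 5 else 0)"

lemma vertex_charge_eq: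
  assumes z: "z \<in> D"
  shows "(\<Sum>x\<in>map_vertex a1 a2 z. 12 / card (map_vertex a1 a2 x) - 1 + transfer (a0 x) - transfer x)
    = 12 - card (map_vertex a1 a2 z) * (1 + transfer z)
      + card {x \<in> map_vertex a1 a2 z. map_degree a1 a2 (a0 x) = 5} / 5"
proof -
  define V where "V = map_vertex a1 a2 z"
  have V: "map_vertex a1 a2 x = V" "transfer x = transfer z" if "x \<in> V" for x
    using that map_vertex_eq[OF z] map_degree_eq[OF z] unfolding V_def transfer_def by simp_all
  have "finite V"
    unfolding V_def by (rule finite_map_vertex[OF z])
  have "card V \<noteq> 0"
    using card_map_vertex_ge_4[OF z] unfolding V_def by linarith
  have "(\<Sum>x\<in>V. 12 / card (map_vertex a1 a2 x) - 1 + transfer (a0 x) - transfer x)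
      = (\<Sum>x\<in>V. (12 / card V - 1 - transfer z) + transfer (a0 x))"
    using V by (intro sum.cong) simp_all
  also have "\<dots> = (\<Sum>x\<in>V. 12 / card V - 1 - transfer z) + (\<Sum>x\<in>V. transfer (a0 x))"
    by (rule sum.distrib)
  also have "(\<Sum>x\<in>V. 12 / card V - 1 - transfer z) = 12 - card V * (1 + transfer z)"
    using \<open>card V \<noteq> 0\<close> by (simp add: field_simps)
  also have "(\<Sum>x\<in>V. transfer (a0 x)) = card {x \<in> V. map_degree a1 a2 (a0 x) = 5} / 5"
    using sum.inter_filter[OF \<open>finite V\<close>, of "\<lambda>_. 1 / 5 :: real" "\<lambda>x. map_degree a1 a2 (a0 x) = 5"]
    by (simp add: transfer_def)
  finally show ?thesis
    unfolding V_def .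
qed

lemma vertex_charge_nonpos:
  assumes no_light: "\<And>x. x \<in> D \<Longrightarrow> map_degree a1 a2 x \<notin> {2, 3, 4, 6}"
    and no_55: "\<And>x. x \<in> D \<Longrightarrow> map_degree a1 a2 x = 5 \<Longrightarrow> map_degree a1 a2 (a0 x) \<noteq> 5"
    and z: "z \<in> D"
  shows "(\<Sum>x\<in>map_vertex a1 a2 z. 12 / card (map_vertex a1 a2 x) - 1 + transfer (a0 x) - transfer x) \<le> 0"
proof -
  define m k where "m = card (map_vertex a1 a2 z)"
    and "k = card {x \<in> map_vertex a1 a2 z. map_degree a1 a2 (a0 x) = 5}"
  have "4 \<le> m" "2 * k \<le> m" "map_degree a1 a2 z = m div 2"
    using card_map_vertex_ge_4[OF z] card_flags_to_degree_5_le_half[OF no_55 z]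
    unfolding m_def k_def map_degree_def by simp_all
  show ?thesis
  proof (cases "m div 2 = 5")
    case True
    have "k = 0"
      using no_55 map_degree_eq[OF z] map_vertex_subset[OF z] True \<open>map_degree a1 a2 z = m div 2\<close>
      unfolding k_def by (auto simp: finite_map_vertex[OF z])
    then show ?thesis
      unfolding vertex_charge_eq[OF z] m_def[symmetric] k_def[symmetric]
      using True \<open>map_degree a1 a2 z = m div 2\<close> by (simp add: transfer_def)
  next
    case False
    moreover have "m div 2 \<notin> {2, 3, 4, 6}"
      using no_light[OF z] \<open>map_degree a1 a2 z = m div 2\<close> by simp
    ultimately have "14 \<le> m"
      using \<open>4 \<le> m\<close> by auto
    then show ?thesis
      unfolding vertex_charge_eq[OF z] m_def[symmetric] k_def[symmetric]
      using False \<open>2 * k \<le> m\<close> \<open>map_degree a1 a2 z = m div 2\<close> by (simp add: transfer_def)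
  qed
qed

lemma euler_char_nonpos:
  assumes no_light: "\<And>x. x \<in> D \<Longrightarrow> map_degree a1 a2 x \<notin> {2, 3, 4, 6}"
    and no_55: "\<And>x. x \<in> D \<Longrightarrow> map_degree a1 a2 x = 5 \<Longrightarrow> map_degree a1 a2 (a0 x) \<noteq> 5"
  shows "euler_char D a0 a1 a2 \<le> 0"
proof -
  let ?charge = "\<lambda>x. 12 / card (map_vertex a1 a2 x) - 1 + transfer (a0 x) - transfer x"
  have "bij_betw a0 D D"
    by (rule bij_betw_byWitness[where f' = a0]) auto
  then have "(\<Sum>x\<in>D. transfer (a0 x)) = (\<Sum>x\<in>D. transfer x)"
    by (rule sum.reindex_bij_betw)
  moreover have "all_faces_triangles D a0 a1"
    using multitriangulation by (simp add: multitriangulation_def)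
  ultimately have "12 * real_of_int (euler_char D a0 a1 a2) = (\<Sum>x\<in>D. ?charge x)"
    by (simp add: euler_char_triangulation sum.distrib sum_subtractf)
  also have "\<dots> = (\<Sum>K\<in>map_vertex a1 a2 ` D. \<Sum>x\<in>K. ?charge x)"
    unfolding map_vertex_def[abs_def] by (rule sum_over_orbits[OF finite_D involutions_on_generators]) auto
  also have "\<dots> \<le> 0"
  proof (rule sum_nonpos)
    fix K assume "K \<in> map_vertex a1 a2 ` D"
    then obtain z where z: "z \<in> D" and K: "K = map_vertex a1 a2 z"
      by (rule imageE)
    show "(\<Sum>x\<in>K. ?charge x) \<le> 0"
      unfolding K by (rule vertex_charge_nonpos[OF no_light no_55 z])
  qed
  finally show ?thesis by simp
qed

end

theorem lemma2p17:
  fixes D :: "'a set" and a0 a1 a2 :: "'a \<Rightarrow> 'a"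
  assumes "projective_plane_map D a0 a1 a2"
    and "multitriangulation D a0 a1 a2"
  shows "(\<exists>x\<in>D. map_degree a1 a2 x \<in> {2, 3, 4, 6}) \<or>
         (\<exists>x\<in>D. map_degree a1 a2 x = 5 \<and> map_degree a1 a2 (a0 x) = 5)"
proof (rule ccontr)
  assume "\<not> ?thesis"
  then have no_light: "\<And>x. x \<in> D \<Longrightarrow> map_degree a1 a2 x \<notin> {2, 3, 4, 6}"
    and no_55: "\<And>x. x \<in> D \<Longrightarrow> map_degree a1 a2 x = 5 \<Longrightarrow> map_degree a1 a2 (a0 x) \<noteq> 5"
    by auto
  have "gmap D a0 a1 a2" and "euler_char D a0 a1 a2 = 1"
    using assms(1) by (simp_all add: projective_plane_map_def)
  interpret loopless_triangulation D a0 a1 a2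
    by (unfold_locales; fact)
  have "euler_char D a0 a1 a2 \<le> 0"
    by (rule euler_char_nonpos[OF no_light no_55])
  then show False
    using \<open>euler_char D a0 a1 a2 = 1\<close> by simp
qed

end
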